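(* For every initial state $x(0)\in\mathbb O^n$, the trajectory $x(t)$ of the PID opinion dynamics almost surely reaches an equilibrium in finite time.
   Context: Let $n\ge 1$, $\mathcal V=\{1,\dots,n\}$, and let $W=(w_{ij})$ be an $n\times n$ row-stochastic matrix (nonnegative entries, each row summing to $1$). The opinion set is a finite set of consecutive integers $\mathbb O=\{k,k+1,\dots,k+s\}$, and $\theta\in\mathbb O$ is a fixed "truth". For $x\in\mathbb O^n$, $i\in\mathcal V$, $z\in\mathbb O$, define $C^i_{\mathrm{social}}(z;x)=\sum_{j=1}^n w_{ij}|z-x_j|$ and $C^i_{\mathrm{cog}}(z)=|z-\theta|$, and the Pareto-improvement set $P_i(x)=\{z\in\mathbb O: C^i_{\mathrm{social}}(z;x)\le C^i_{\mathrm{social}}(x_i;x),\ |z-\theta|\le |x_i-\theta|\}$. PID opinion dynamics: starting from $x(0)$, at each time $t+1$ a node $i$ is chosen uniformly at random from $\mathcal V$ (independently over time) and sets $x_i(t+1)$ to an element chosen at random from $P_i(x(t))$, each element of $P_i(x(t))$ having positive probability; all other nodes keep their opinions. An equilibrium is a state $x^*$ with $P_i(x^* )=\{x^*_i\}$ for all $i\in\mathcal V$. *)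

theory Defs
  imports "HOL-Probability.Probability"
begin

type_synonym state = "nat \<Rightarrow> int"

definition opinions :: "int \<Rightarrow> nat \<Rightarrow> int set" where
  "opinions k s = {k..k + int s}"

definition states :: "nat \<Rightarrow> int set \<Rightarrow> state set" where
  "states n Op = {x. (\<forall>i\<in>{1..n}. x i \<in> Op) \<and> (\<forall>i. i \<notin> {1..n} \<longrightarrow> x i = 0)}"

definition row_stochastic :: "nat \<Rightarrow> (nat \<Rightarrow> nat \<Rightarrow> real) \<Rightarrow> bool" where
  "row_stochastic n W \<longleftrightarrow> (\<forall>i\<in>{1..n}. \<forall>j\<in>{1..n}. W i j \<ge> 0) \<and>
                          (\<forall>i\<in>{1..n}. (\<Sum>j\<in>{1..n}. W i j) = 1)"

definition C_social :: "nat \<Rightarrow> (nat \<Rightarrow> nat \<Rightarrow> real) \<Rightarrow> nat \<Rightarrow> int \<Rightarrow> state \<Rightarrow> real" where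
  "C_social n W i z x = (\<Sum>j\<in>{1..n}. W i j * \<bar>real_of_int (z - x j)\<bar>)"

definition C_cog :: "int \<Rightarrow> int \<Rightarrow> int" where
  "C_cog \<theta> z = \<bar>z - \<theta>\<bar>"

definition pareto_set :: "nat \<Rightarrow> (nat \<Rightarrow> nat \<Rightarrow> real) \<Rightarrow> int set \<Rightarrow> int \<Rightarrow> nat \<Rightarrow> state \<Rightarrow> int set" where
  "pareto_set n W Op \<theta> i x =
     {z \<in> Op. C_social n W i z x \<le> C_social n W i (x i) x \<and> C_cog \<theta> z \<le> C_cog \<theta> (x i)}"

definition equilibrium :: "nat \<Rightarrow> (nat \<Rightarrow> nat \<Rightarrow> real) \<Rightarrow> int set \<Rightarrow> int \<Rightarrow> state \<Rightarrow> bool" where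
  "equilibrium n W Op \<theta> x \<longleftrightarrow> (\<forall>i\<in>{1..n}. pareto_set n W Op \<theta> i x = {x i})"

text \<open>Randomness of one time step: a node i chosen uniformly from 1..n, together with,
independently, for every state y a new opinion g y drawn from K y i (K y i is the law of
the new opinion of node i in state y; its support is P_i(y)).  Steps are i.i.d. over time, which realises the PID Markov chain.\<close>
definition step_pmf :: "nat \<Rightarrow> int set \<Rightarrow> (state \<Rightarrow> nat \<Rightarrow> int pmf)
    \<Rightarrow> (nat \<times> (state \<Rightarrow> int)) pmf" where
  "step_pmf n Op K =
     bind_pmf (pmf_of_set {1..n})
       (\<lambda>i. map_pmf (\<lambda>g. (i, g)) (Pi_pmf (states n Op) 0 (\<lambda>y. K y i)))"

primrec traj :: "(nat \<times> (state \<Rightarrow> int)) stream \<Rightarrow> state \<Rightarrow> nat \<Rightarrow> state" where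
  "traj \<omega> x0 0 = x0"
| "traj \<omega> x0 (Suc t) =
     (let x = traj \<omega> x0 t; (i, g) = \<omega> !! t in x(i := g x))"

end

(*
  The total distance of the opinions to the truth never increases under Pareto moves.
  At a non-equilibrium state some node i has a Pareto improvement z other than x_i;
  either z is strictly closer to the truth, or z is the mirror image 2 theta - x_i, and
  then convexity of the social cost puts theta itself into P_i.  So every
  non-equilibrium state has a positive-probability move lowering the total distance.
  The probability e(y) of never reaching an equilibrium from y is harmonic for the
  chain on the finite state space; if its maximum were positive, a maximiser of least
  total distance would be a non-equilibrium whose lowering move leads to a smaller
  value of e, so the average of e over its successors would fall below the maximum.
*)

theory Submission
  imports Defs
begin

primrec walk :: "('b \<Rightarrow> 'a \<Rightarrow> 'b) \<Rightarrow> 'a stream \<Rightarrow> 'b \<Rightarrow> nat \<Rightarrow> 'b" where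
  "walk f \<omega> y 0 = y"
| "walk f \<omega> y (Suc t) = walk f (stl \<omega>) (f y (shd \<omega>)) t"

lemma walk_Suc_snoc: "walk f \<omega> y (Suc t) = f (walk f \<omega> y t) (\<omega> !! t)"
  by (induction t arbitrary: \<omega> y) simp_all

(* Countably many successors per state are what make the walk measurable: the factors
   of the product sigma-algebra are discrete but possibly uncountable. *)
lemma measurable_walk:
  assumes "\<And>y. countable (range (f y))"
  shows "(\<lambda>\<omega>. walk f \<omega> y t) \<in> stream_space (measure_pmf P) \<rightarrow>\<^sub>M count_space UNIV"
proof (induction t arbitrary: y)
  case 0
  show ?case by simp
next
  case (Suc t)
  show ?case
    unfolding walk.simps
  proof (rule measurable_compose_countable'[where I = "range (f y)"
      and f = "\<lambda>z \<omega>. walk f (stl \<omega>) z t" and g = "\<lambda>\<omega>. f y (shd \<omega>)"])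
    show "(\<lambda>\<omega>. walk f (stl \<omega>) z t) \<in> stream_space (measure_pmf P) \<rightarrow>\<^sub>M count_space UNIV" for z
      by (rule measurable_compose[OF measurable_stl Suc.IH])
    show "(\<lambda>\<omega>. f y (shd \<omega>)) \<in> stream_space (measure_pmf P) \<rightarrow>\<^sub>M count_space (range (f y))"
      by (rule measurable_compose[OF measurable_shd]) simp
  qed (rule assms)
qed

definition walks_avoiding :: "('b \<Rightarrow> 'a \<Rightarrow> 'b) \<Rightarrow> ('b \<Rightarrow> bool) \<Rightarrow> 'b \<Rightarrow> 'a stream set" where
  "walks_avoiding f E y = {\<omega>. \<forall>t. \<not> E (walk f \<omega> y t)}"

lemma sets_walks_avoiding:
  assumes "\<And>y. countable (range (f y))"
  shows "walks_avoiding f E y \<in> sets (stream_space (measure_pmf P))"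
proof -
  have "(\<lambda>\<omega>. walk f \<omega> y t) \<in> stream_space (measure_pmf P) \<rightarrow>\<^sub>M count_space UNIV" for t
    using assms by (rule measurable_walk)
  then have events: "(\<lambda>\<omega>. walk f \<omega> y t) -` {x. \<not> E x} \<inter> space (stream_space (measure_pmf P))
      \<in> sets (stream_space (measure_pmf P))" for t
    by (rule measurable_sets) simp
  have "walks_avoiding f E y =
      (\<Inter>t. (\<lambda>\<omega>. walk f \<omega> y t) -` {x. \<not> E x} \<inter> space (stream_space (measure_pmf P)))"
    by (auto simp: walks_avoiding_def space_stream_space)
  also have "\<dots> \<in> sets (stream_space (measure_pmf P))"
    using events by (intro sets.countable_INT') auto
  finally show ?thesis .
qed

lemma walks_avoiding_target: "E y \<Longrightarrow> walks_avoiding f E y = {}"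
  by (auto simp: walks_avoiding_def intro: exI[of _ 0])

lemma Cons_in_walks_avoiding:
  assumes "\<not> E y"
  shows "a ## \<omega> \<in> walks_avoiding f E y \<longleftrightarrow> \<omega> \<in> walks_avoiding f E (f y a)"
proof -
  have "(\<forall>t. \<not> E (walk f (a ## \<omega>) y t)) \<longleftrightarrow> (\<forall>t. \<not> E (walk f (a ## \<omega>) y (Suc t)))"
  proof (intro iffI allI)
    fix t
    assume "\<forall>t. \<not> E (walk f (a ## \<omega>) y t)"
    then show "\<not> E (walk f (a ## \<omega>) y (Suc t))"
      by blast
  next
    fix t
    assume "\<forall>t. \<not> E (walk f (a ## \<omega>) y (Suc t))"
    with assms show "\<not> E (walk f (a ## \<omega>) y t)"
      by (cases t) simp_all
  qed
  then show ?thesis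
    by (simp add: walks_avoiding_def)
qed

lemma emeasure_walks_avoiding:
  assumes "\<And>y. countable (range (f y))" and "\<not> E y"
  shows "emeasure (stream_space (measure_pmf P)) (walks_avoiding f E y) =
    (\<integral>\<^sup>+a. emeasure (stream_space (measure_pmf P)) (walks_avoiding f E (f y a))
      \<partial>measure_pmf P)"
  using prob_space.emeasure_stream_space[OF measure_pmf.prob_space_axioms
      sets_walks_avoiding[OF assms(1)]]
  by (simp add: space_stream_space Cons_in_walks_avoiding assms(2))

lemma nn_integral_measure_pmf_less:
  fixes g :: "'a \<Rightarrow> ennreal"
  assumes "\<And>a. a \<in> set_pmf P \<Longrightarrow> g a \<le> m"
    and "a0 \<in> set_pmf P" and "g a0 < m" and "m < \<infinity>"
  shows "(\<integral>\<^sup>+a. g a \<partial>measure_pmf P) < m"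
proof -
  have le: "AE a in measure_pmf P. g a \<le> m"
    using assms(1) by (simp add: AE_measure_pmf_iff)
  have "(\<integral>\<^sup>+a. g a \<partial>measure_pmf P) \<le> (\<integral>\<^sup>+a. m \<partial>measure_pmf P)"
    using le by (rule nn_integral_mono_AE)
  also have const: "(\<integral>\<^sup>+a. m \<partial>measure_pmf P) = m"
    by (simp add: measure_pmf.emeasure_space_1)
  finally have "(\<integral>\<^sup>+a. g a \<partial>measure_pmf P) \<noteq> \<infinity>"
    using assms(4) by auto
  moreover have "\<not> (AE a in measure_pmf P. m \<le> g a)"
    using assms(2,3) by (auto simp: AE_measure_pmf_iff not_le)
  ultimately have "(\<integral>\<^sup>+a. g a \<partial>measure_pmf P) < (\<integral>\<^sup>+a. m \<partial>measure_pmf P)"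
    using le by (intro nn_integral_less) auto
  with const show ?thesis by simp
qed

lemma harmonic_eq_0_by_descent:
  fixes e :: "'b \<Rightarrow> ennreal" and \<phi> :: "'b \<Rightarrow> nat"
  assumes "finite St"
    and closed: "\<And>y a. y \<in> St \<Longrightarrow> a \<in> set_pmf P \<Longrightarrow> f y a \<in> St"
    and descent: "\<And>y. y \<in> St \<Longrightarrow> \<not> E y \<Longrightarrow> \<exists>a\<in>set_pmf P. \<phi> (f y a) < \<phi> y"
    and target: "\<And>y. y \<in> St \<Longrightarrow> E y \<Longrightarrow> e y = 0"
    and harmonic: "\<And>y. y \<in> St \<Longrightarrow> \<not> E y \<Longrightarrow> e y = (\<integral>\<^sup>+a. e (f y a) \<partial>measure_pmf P)"
    and bounded: "\<And>y. y \<in> St \<Longrightarrow> e y < \<infinity>"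
    and "y \<in> St"
  shows "e y = 0"
proof (rule ccontr)
  assume "e y \<noteq> 0"
  define m where "m = Max (e ` St)"
  have le_m: "e x \<le> m" if "x \<in> St" for x
    using \<open>finite St\<close> that by (simp add: m_def)
  have "m \<in> e ` St"
    using \<open>finite St\<close> \<open>y \<in> St\<close> unfolding m_def by (intro Max_in) auto
  then obtain y0 where y0: "y0 \<in> St" "e y0 = m"
    and least: "\<And>x. x \<in> St \<Longrightarrow> e x = m \<Longrightarrow> \<phi> y0 \<le> \<phi> x"
    using ex_has_least_nat[of "\<lambda>x. x \<in> St \<and> e x = m" _ \<phi>] by blast
  have "m \<noteq> 0"
    using \<open>e y \<noteq> 0\<close> le_m[OF \<open>y \<in> St\<close>] by auto
  with target y0 have "\<not> E y0"
    by auto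
  with descent y0(1) obtain a0 where a0: "a0 \<in> set_pmf P" and "\<phi> (f y0 a0) < \<phi> y0"
    by blast
  moreover have "f y0 a0 \<in> St"
    using closed[OF y0(1) a0] .
  ultimately have "e (f y0 a0) \<noteq> m"
    using least by force
  with le_m[OF \<open>f y0 a0 \<in> St\<close>] have "e (f y0 a0) < m"
    by simp
  moreover have "e (f y0 a) \<le> m" if "a \<in> set_pmf P" for a
    using le_m closed[OF y0(1) that] by blast
  moreover have "m < \<infinity>"
    using bounded y0 by blast
  ultimately have "(\<integral>\<^sup>+a. e (f y0 a) \<partial>measure_pmf P) < m"
    using a0 by (intro nn_integral_measure_pmf_less)
  then show False
    using harmonic[OF y0(1) \<open>\<not> E y0\<close>] y0(2) by simp
qed

lemma AE_walk_reaches_target: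
  fixes \<phi> :: "'b \<Rightarrow> nat"
  assumes countable: "\<And>y. countable (range (f y))" and "finite St"
    and closed: "\<And>y a. y \<in> St \<Longrightarrow> a \<in> set_pmf P \<Longrightarrow> f y a \<in> St"
    and descent: "\<And>y. y \<in> St \<Longrightarrow> \<not> E y \<Longrightarrow> \<exists>a\<in>set_pmf P. \<phi> (f y a) < \<phi> y"
    and "y \<in> St"
  shows "AE \<omega> in stream_space (measure_pmf P). \<exists>t. E (walk f \<omega> y t)"
proof -
  let ?S = "stream_space (measure_pmf P)"
  define e where "e x = emeasure ?S (walks_avoiding f E x)" for x
  have "e y = 0"
  proof (rule harmonic_eq_0_by_descent[where e = e and f = f and St = St and P = P
        and E = E and \<phi> = \<phi>])
    show "e x = 0" if "x \<in> St" and "E x" for x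
      using that(2) by (simp add: e_def walks_avoiding_target)
    show "e x = (\<integral>\<^sup>+a. e (f x a) \<partial>measure_pmf P)" if "x \<in> St" and "\<not> E x" for x
      unfolding e_def using countable that(2) by (rule emeasure_walks_avoiding)
    have le_1: "e x \<le> 1" for x
      unfolding e_def using prob_space_measure_pmf
      by (intro prob_space.emeasure_le_1 prob_space.prob_space_stream_space)
    show "e x < \<infinity>" for x
      using le_1[of x] ennreal_one_less_top by (simp add: infinity_ennreal_def le_less_trans)
  qed (use \<open>finite St\<close> closed descent \<open>y \<in> St\<close> in \<open>blast+\<close>)
  then have "walks_avoiding f E y \<in> null_sets ?S"
    using sets_walks_avoiding[of f E y P, OF countable] unfolding e_def by (rule null_setsI)
  then show ?thesis
    by (rule AE_I') (auto simp: walks_avoiding_def space_stream_space)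
qed

definition pid_step :: "state \<Rightarrow> nat \<times> (state \<Rightarrow> int) \<Rightarrow> state" where
  "pid_step y a = y(fst a := snd a y)"

lemma traj_eq_walk: "traj \<omega> y t = walk pid_step \<omega> y t"
  by (induction t)
    (simp_all add: walk_Suc_snoc pid_step_def Let_def split_beta del: walk.simps(2))

lemma countable_range_pid_step: "countable (range (pid_step y))"
proof -
  have "range (pid_step y) \<subseteq> (\<lambda>(i, v). y(i := v)) ` (UNIV :: (nat \<times> int) set)"
    by (auto simp: pid_step_def)
  then show ?thesis
    by (rule countable_subset) simp
qed

lemma finite_states:
  assumes "finite Op"
  shows "finite (states n Op)"
proof -
  have "states n Op = PiE_dflt {1..n} 0 (\<lambda>_. Op)"
    by (auto simp: states_def PiE_dflt_def)
  with assms show ?thesis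
    by (simp add: finite_PiE_dflt)
qed

lemma set_step_pmf:
  assumes "n \<ge> 1" and "finite (states n Op)"
  shows "set_pmf (step_pmf n Op K) =
    (SIGMA i:{1..n}. PiE_dflt (states n Op) 0 (\<lambda>y. set_pmf (K y i)))"
  using assms by (auto simp: step_pmf_def set_Pi_pmf o_def)

lemma pid_step_in_states:
  assumes "n \<ge> 1" and "finite (states n Op)"
    and "\<And>x i. x \<in> states n Op \<Longrightarrow> i \<in> {1..n} \<Longrightarrow> set_pmf (K x i) \<subseteq> Op"
    and "y \<in> states n Op" and "a \<in> set_pmf (step_pmf n Op K)"
  shows "pid_step y a \<in> states n Op"
proof -
  have "fst a \<in> {1..n}" and "snd a y \<in> set_pmf (K y (fst a))"
    using assms(5,4) by (auto simp: set_step_pmf[OF assms(1,2)] PiE_dflt_def)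
  with assms(3,4) show ?thesis
    by (auto simp: pid_step_def states_def)
qed

lemma ex_pid_step_eq_update:
  assumes "n \<ge> 1" and "finite (states n Op)"
    and "i \<in> {1..n}" and "y \<in> states n Op" and "z \<in> set_pmf (K y i)"
  shows "\<exists>a\<in>set_pmf (step_pmf n Op K). pid_step y a = y(i := z)"
proof -
  obtain g where "g \<in> set_pmf (Pi_pmf (states n Op) 0 (\<lambda>x. K x i))"
    using set_pmf_not_empty[of "Pi_pmf (states n Op) 0 (\<lambda>x. K x i)"] by (meson ex_in_conv)
  then have "g(y := z) \<in> PiE_dflt (states n Op) 0 (\<lambda>x. set_pmf (K x i))"
    using assms(2,4,5) by (auto simp: set_Pi_pmf PiE_dflt_def)
  then have "(i, g(y := z)) \<in> set_pmf (step_pmf n Op K)"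
    using assms(3) by (simp add: set_step_pmf[OF assms(1,2)])
  then show ?thesis
    by (force simp: pid_step_def)
qed

lemma C_social_midpoint:
  assumes "row_stochastic n W" and "i \<in> {1..n}" and "2 * c = a + b"
  shows "2 * C_social n W i c x \<le> C_social n W i a x + C_social n W i b x"
proof -
  have "2 * (W i j * \<bar>real_of_int (c - x j)\<bar>) \<le>
      W i j * \<bar>real_of_int (a - x j)\<bar> + W i j * \<bar>real_of_int (b - x j)\<bar>" if "j \<in> {1..n}" for j
  proof -
    have "real_of_int (a - x j) + real_of_int (b - x j) = 2 * real_of_int (c - x j)"
      using arg_cong[OF assms(3), of real_of_int] by simp
    then have "2 * \<bar>real_of_int (c - x j)\<bar> = \<bar>real_of_int (a - x j) + real_of_int (b - x j)\<bar>"
      by (simp only: abs_mult abs_numeral)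
    also have "\<dots> \<le> \<bar>real_of_int (a - x j)\<bar> + \<bar>real_of_int (b - x j)\<bar>"
      by (rule abs_triangle_ineq)
    finally have "2 * \<bar>real_of_int (c - x j)\<bar> \<le>
        \<bar>real_of_int (a - x j)\<bar> + \<bar>real_of_int (b - x j)\<bar>" .
    moreover have "0 \<le> W i j"
      using assms(1,2) that by (simp add: row_stochastic_def)
    ultimately have "W i j * (2 * \<bar>real_of_int (c - x j)\<bar>) \<le>
        W i j * (\<bar>real_of_int (a - x j)\<bar> + \<bar>real_of_int (b - x j)\<bar>)"
      by (rule mult_left_mono)
    then show ?thesis
      by (simp add: algebra_simps)
  qed
  then show ?thesis
    unfolding C_social_def sum_distrib_left sum.distrib[symmetric] by (rule sum_mono)
qed

lemma truth_in_pareto_set: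
  assumes "row_stochastic n W" and "i \<in> {1..n}" and "\<theta> \<in> Op"
    and "z \<in> pareto_set n W Op \<theta> i x" and "z + x i = 2 * \<theta>"
  shows "\<theta> \<in> pareto_set n W Op \<theta> i x"
proof -
  have "2 * C_social n W i \<theta> x \<le> C_social n W i z x + C_social n W i (x i) x"
    using assms(5) by (intro C_social_midpoint[OF assms(1,2)]) simp
  moreover have "C_social n W i z x \<le> C_social n W i (x i) x"
    using assms(4) by (simp add: pareto_set_def)
  ultimately show ?thesis
    using assms(3) by (simp add: pareto_set_def C_cog_def)
qed

lemma pareto_set_closer_to_truth:
  assumes "row_stochastic n W" and "\<theta> \<in> Op" and "y \<in> states n Op"
    and "\<not> equilibrium n W Op \<theta> y"
  shows "\<exists>i\<in>{1..n}. \<exists>z\<in>pareto_set n W Op \<theta> i y. \<bar>z - \<theta>\<bar> < \<bar>y i - \<theta>\<bar>"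
proof -
  obtain i where i: "i \<in> {1..n}" and "pareto_set n W Op \<theta> i y \<noteq> {y i}"
    using assms(4) unfolding equilibrium_def by blast
  moreover have "y i \<in> pareto_set n W Op \<theta> i y"
    using assms(3) i by (simp add: pareto_set_def states_def)
  ultimately obtain z where z: "z \<in> pareto_set n W Op \<theta> i y" and "z \<noteq> y i"
    by blast
  moreover have "\<bar>z - \<theta>\<bar> \<le> \<bar>y i - \<theta>\<bar>"
    using z by (simp add: pareto_set_def C_cog_def)
  ultimately consider "\<bar>z - \<theta>\<bar> < \<bar>y i - \<theta>\<bar>" | "z + y i = 2 * \<theta>" and "y i \<noteq> \<theta>"
    by linarith
  then show ?thesis
  proof cases
    case 1
    with i z show ?thesis by blast
  next
    case 2
    with i show ?thesis
      using truth_in_pareto_set[OF assms(1) i assms(2) z] by force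
  qed
qed

definition truth_distance :: "nat \<Rightarrow> int \<Rightarrow> state \<Rightarrow> nat" where
  "truth_distance n \<theta> y = (\<Sum>j\<in>{1..n}. nat \<bar>y j - \<theta>\<bar>)"

lemma truth_distance_update_less:
  assumes "i \<in> {1..n}" and "\<bar>z - \<theta>\<bar> < \<bar>y i - \<theta>\<bar>"
  shows "truth_distance n \<theta> (y(i := z)) < truth_distance n \<theta> y"
  unfolding truth_distance_def using assms by (intro sum_strict_mono_ex1) auto

lemma pid_step_decreases_truth_distance:
  assumes "n \<ge> 1" and "finite (states n Op)" and "row_stochastic n W" and "\<theta> \<in> Op"
    and K: "\<And>x i. x \<in> states n Op \<Longrightarrow> i \<in> {1..n} \<Longrightarrow> set_pmf (K x i) = pareto_set n W Op \<theta> i x"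
    and "y \<in> states n Op" and "\<not> equilibrium n W Op \<theta> y"
  shows "\<exists>a\<in>set_pmf (step_pmf n Op K).
    truth_distance n \<theta> (pid_step y a) < truth_distance n \<theta> y"
proof -
  obtain i z where i: "i \<in> {1..n}" and z: "z \<in> pareto_set n W Op \<theta> i y"
    and closer: "\<bar>z - \<theta>\<bar> < \<bar>y i - \<theta>\<bar>"
    using pareto_set_closer_to_truth[OF assms(3,4,6,7)] by blast
  obtain a where a: "a \<in> set_pmf (step_pmf n Op K)" and "pid_step y a = y(i := z)"
    using ex_pid_step_eq_update[OF assms(1,2) i assms(6)] z K[OF assms(6) i] by blast
  then have "truth_distance n \<theta> (pid_step y a) < truth_distance n \<theta> y"
    using truth_distance_update_less[where y = y, OF i closer] by simp
  with a show ?thesis ..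
qed

theorem theorem2:
  fixes n :: nat and W :: "nat \<Rightarrow> nat \<Rightarrow> real" and k :: int and s :: nat and \<theta> :: int
    and K :: "state \<Rightarrow> nat \<Rightarrow> int pmf" and x0 :: state
  assumes "n \<ge> 1"
    and "row_stochastic n W"
    and "\<theta> \<in> opinions k s"
    and "\<And>x i. x \<in> states n (opinions k s) \<Longrightarrow> i \<in> {1..n} \<Longrightarrow>
           set_pmf (K x i) = pareto_set n W (opinions k s) \<theta> i x"
    and "x0 \<in> states n (opinions k s)"
  shows "AE \<omega> in stream_space (measure_pmf (step_pmf n (opinions k s) K)).
           \<exists>t. equilibrium n W (opinions k s) \<theta> (traj \<omega> x0 t)"
proof -
  let ?Op = "opinions k s"
  have fin: "finite (states n ?Op)"
    by (simp add: finite_states opinions_def)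
  have K_Op: "set_pmf (K x i) \<subseteq> ?Op" if "x \<in> states n ?Op" and "i \<in> {1..n}" for x i
    using assms(4)[OF that] by (auto simp: pareto_set_def)
  have "AE \<omega> in stream_space (measure_pmf (step_pmf n ?Op K)).
      \<exists>t. equilibrium n W ?Op \<theta> (walk pid_step \<omega> x0 t)"
  proof (rule AE_walk_reaches_target[where f = pid_step and St = "states n ?Op"
        and E = "equilibrium n W ?Op \<theta>" and \<phi> = "truth_distance n \<theta>"])
    show "countable (range (pid_step y))" for y
      by (rule countable_range_pid_step)
    show "pid_step y a \<in> states n ?Op"
      if "y \<in> states n ?Op" and "a \<in> set_pmf (step_pmf n ?Op K)" for y a
      using pid_step_in_states[OF assms(1) fin K_Op that] .
    show "\<exists>a\<in>set_pmf (step_pmf n ?Op K).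
        truth_distance n \<theta> (pid_step y a) < truth_distance n \<theta> y"
      if "y \<in> states n ?Op" and "\<not> equilibrium n W ?Op \<theta> y" for y
      using pid_step_decreases_truth_distance[OF assms(1) fin assms(2,3,4) that] .
  qed (fact fin assms(5))+
  then show ?thesis
    by (simp add: traj_eq_walk)
qed

end
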